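(* Let $G$ and $H$ be graphs with no isolated vertices. Then $$\gamma_{oir2}(G\Box H)\leq \alpha(G)\beta(H)+\beta(G)|V(H)|-\min\{\beta(G),\beta(H)\}.$$
   Context: All graphs are finite and simple. $\alpha(F)$ denotes the independence number of a graph $F$ and $\beta(F)$ its vertex cover number, so $\alpha(F)+\beta(F)=|V(F)|$. For a graph $G$, a function $f:V(G)\to\mathcal{P}(\{1,2\})$ is an outer-independent 2-rainbow dominating function (OI2RD function) if every vertex $v$ with $f(v)=\emptyset$ satisfies $\bigcup_{u\in N(v)}f(u)=\{1,2\}$ and the set $\{v: f(v)=\emptyset\}$ is independent. The weight of $f$ is $\sum_{v}|f(v)|$ and $\gamma_{oir2}(G)$ is the minimum weight of an OI2RD function of $G$. The Cartesian product $G\Box H$ has vertex set $V(G)\times V(H)$, with $(x,y)(x',y')$ an edge iff either $x=x'$ and $yy'\in E(H)$, or $y=y'$ and $xx'\in E(G)$. *)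

theory Defs
  imports Main
begin

definition simple_graph :: "'a set \<Rightarrow> ('a \<Rightarrow> 'a \<Rightarrow> bool) \<Rightarrow> bool" where
  "simple_graph V E \<longleftrightarrow> finite V \<and> (\<forall>x y. E x y \<longrightarrow> x \<in> V \<and> y \<in> V)
     \<and> (\<forall>x y. E x y \<longrightarrow> E y x) \<and> (\<forall>x. \<not> E x x)"

definition no_isolated :: "'a set \<Rightarrow> ('a \<Rightarrow> 'a \<Rightarrow> bool) \<Rightarrow> bool" where
  "no_isolated V E \<longleftrightarrow> (\<forall>v\<in>V. \<exists>u. E v u)"

definition nbhd :: "('a \<Rightarrow> 'a \<Rightarrow> bool) \<Rightarrow> 'a \<Rightarrow> 'a set" where
  "nbhd E v = {u. E v u}"

definition indep_set :: "'a set \<Rightarrow> ('a \<Rightarrow> 'a \<Rightarrow> bool) \<Rightarrow> 'a set \<Rightarrow> bool" where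
  "indep_set V E S \<longleftrightarrow> S \<subseteq> V \<and> (\<forall>x\<in>S. \<forall>y\<in>S. \<not> E x y)"

definition vertex_cover :: "'a set \<Rightarrow> ('a \<Rightarrow> 'a \<Rightarrow> bool) \<Rightarrow> 'a set \<Rightarrow> bool" where
  "vertex_cover V E C \<longleftrightarrow> C \<subseteq> V \<and> (\<forall>x y. E x y \<longrightarrow> x \<in> C \<or> y \<in> C)"

definition indep_num :: "'a set \<Rightarrow> ('a \<Rightarrow> 'a \<Rightarrow> bool) \<Rightarrow> nat" where
  "indep_num V E = Max {card S | S. indep_set V E S}"

definition vc_num :: "'a set \<Rightarrow> ('a \<Rightarrow> 'a \<Rightarrow> bool) \<Rightarrow> nat" where
  "vc_num V E = Min {card C | C. vertex_cover V E C}"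

text \<open>Outer-independent 2-rainbow dominating function (values on V matter only).\<close>
definition oi2rd :: "'a set \<Rightarrow> ('a \<Rightarrow> 'a \<Rightarrow> bool) \<Rightarrow> ('a \<Rightarrow> nat set) \<Rightarrow> bool" where
  "oi2rd V E f \<longleftrightarrow> (\<forall>v\<in>V. f v \<subseteq> {1, 2})
     \<and> (\<forall>v\<in>V. f v = {} \<longrightarrow> (\<Union>u\<in>nbhd E v. f u) = {1, 2})
     \<and> indep_set V E {v\<in>V. f v = {}}"

definition weight :: "'a set \<Rightarrow> ('a \<Rightarrow> nat set) \<Rightarrow> nat" where
  "weight V f = (\<Sum>v\<in>V. card (f v))"

definition gamma_oir2 :: "'a set \<Rightarrow> ('a \<Rightarrow> 'a \<Rightarrow> bool) \<Rightarrow> nat" where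
  "gamma_oir2 V E = Min {weight V f | f. oi2rd V E f}"

text \<open>Cartesian product of graphs: vertex set V_G \<times> V_H and this adjacency.\<close>
definition box_edge :: "('a \<Rightarrow> 'a \<Rightarrow> bool) \<Rightarrow> ('b \<Rightarrow> 'b \<Rightarrow> bool) \<Rightarrow> 'a \<times> 'b \<Rightarrow> 'a \<times> 'b \<Rightarrow> bool" where
  "box_edge EG EH p q \<longleftrightarrow> (fst p = fst q \<and> EH (snd p) (snd q)) \<or> (snd p = snd q \<and> EG (fst p) (fst q))"

end

theory Submission
  imports Defs
begin

text \<open>Take minimum vertex covers \<open>C\<^sub>G\<close>, \<open>C\<^sub>H\<close>. Label every vertex of \<open>C\<^sub>G \<times> V(H)\<close> with \<open>{1}\<close>,
every vertex of \<open>(V(G) - C\<^sub>G) \<times> C\<^sub>H\<close> with \<open>{2}\<close>, and the remaining vertices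
\<open>(V(G) - C\<^sub>G) \<times> (V(H) - C\<^sub>H)\<close> with \<open>\<emptyset>\<close>; this is an OI2RD function of weight
\<open>\<beta>(G)|V(H)| + (|V(G)| - \<beta>(G))\<beta>(H) \<le> \<beta>(G)|V(H)| + \<alpha>(G)\<beta>(H)\<close>. Moreover one may additionally
empty the vertices of a matching \<open>D \<subseteq> C\<^sub>G \<times> C\<^sub>H\<close> of size \<open>min{\<beta>(G), \<beta>(H)}\<close> (no two of its
pairs share a coordinate): such a vertex \<open>(g, h)\<close> sees \<open>1\<close> at some \<open>(g, h')\<close>, since the
matching uses only one vertex in the fibre of \<open>g\<close>, and sees \<open>2\<close> at \<open>(g', h)\<close> for a neighbour
\<open>g' \<notin> C\<^sub>G\<close> of \<open>g\<close>, which exists by minimality of \<open>C\<^sub>G\<close>.\<close>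

lemma simple_graph_finite: "simple_graph V E \<Longrightarrow> finite V"
  by (simp add: simple_graph_def)

lemma finite_vertex_cover: "simple_graph V E \<Longrightarrow> vertex_cover V E C \<Longrightarrow> finite C"
  unfolding vertex_cover_def using simple_graph_finite finite_subset by blast

lemma vertex_cover_complement_indep: "vertex_cover V E C \<Longrightarrow> indep_set V E (V - C)"
  unfolding vertex_cover_def indep_set_def by blast

lemma finite_vertex_cover_cards:
  assumes "simple_graph V E"
  shows "finite {card C | C. vertex_cover V E C}"
proof -
  have "{card C | C. vertex_cover V E C} \<subseteq> {0..card V}"
    using simple_graph_finite[OF assms] by (auto simp: vertex_cover_def intro: card_mono)
  then show ?thesis
    using finite_subset by blast
qed

lemma vc_num_le:
  assumes "simple_graph V E" "vertex_cover V E C"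
  shows "vc_num V E \<le> card C"
  unfolding vc_num_def using finite_vertex_cover_cards[OF assms(1)] assms(2) by (auto intro: Min_le)

lemma obtain_minimum_vertex_cover:
  assumes "simple_graph V E"
  obtains C where "vertex_cover V E C" "card C = vc_num V E"
proof -
  have "vertex_cover V E V"
    using assms by (auto simp: vertex_cover_def simple_graph_def)
  then have "{card C | C. vertex_cover V E C} \<noteq> {}"
    by blast
  from Min_in[OF finite_vertex_cover_cards[OF assms] this] show ?thesis
    using that unfolding vc_num_def by auto
qed

lemma minimum_vertex_cover_has_outside_neighbour:
  assumes "simple_graph V E" "vertex_cover V E C" "card C = vc_num V E" "c \<in> C"
  shows "\<exists>u. E c u \<and> u \<notin> C"
proof (rule ccontr)
  assume "\<not> ?thesis"
  then have "vertex_cover V E (C - {c})"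
    using assms(1,2) unfolding vertex_cover_def simple_graph_def by blast
  then have "card C \<le> card (C - {c})"
    using vc_num_le[OF assms(1)] assms(3) by simp
  then show False
    using assms(4) finite_vertex_cover[OF assms(1,2)] by (metis card_Diff1_less_iff not_le)
qed

lemma card_le_indep_num:
  assumes "simple_graph V E" "indep_set V E S"
  shows "card S \<le> indep_num V E"
proof -
  have "{card S | S. indep_set V E S} \<subseteq> {0..card V}"
    using simple_graph_finite[OF assms(1)] by (auto simp: indep_set_def intro: card_mono)
  then have "finite {card S | S. indep_set V E S}"
    using finite_subset by blast
  then show ?thesis
    unfolding indep_num_def using assms(2) by (auto intro: Max_ge)
qed

lemma gamma_oir2_le:
  assumes "finite V" "oi2rd V E f"
  shows "gamma_oir2 V E \<le> weight V f"
proof -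
  have "weight V g \<le> card V * 2" if "oi2rd V E g" for g
  proof -
    have "card (g v) \<le> 2" if "v \<in> V" for v
      using \<open>oi2rd V E g\<close> that card_mono[of "{1, 2::nat}" "g v"] unfolding oi2rd_def by auto
    then show ?thesis
      unfolding weight_def using sum_bounded_above[of V "\<lambda>v. card (g v)" 2] by simp
  qed
  then have "{weight V f | f. oi2rd V E f} \<subseteq> {0..card V * 2}"
    by auto
  then have "finite {weight V f | f. oi2rd V E f}"
    using finite_subset by blast
  then show ?thesis
    unfolding gamma_oir2_def using assms(2) by (auto intro: Min_le)
qed

lemma obtain_matching:
  assumes "finite A" "finite B"
  obtains D where "D \<subseteq> A \<times> B" "card D = min (card A) (card B)"
    "\<And>a b b'. (a, b) \<in> D \<Longrightarrow> (a, b') \<in> D \<Longrightarrow> b = b'"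
    "\<And>a a' b. (a, b) \<in> D \<Longrightarrow> (a', b) \<in> D \<Longrightarrow> a = a'"
proof -
  obtain xs where xs: "set xs = A" "distinct xs"
    using finite_distinct_list[OF assms(1)] by blast
  obtain ys where ys: "set ys = B" "distinct ys"
    using finite_distinct_list[OF assms(2)] by blast
  have "set (zip xs ys) \<subseteq> A \<times> B"
    using xs ys by (auto dest: set_zip_leftD set_zip_rightD)
  moreover have "card (set (zip xs ys)) = min (card A) (card B)"
    using distinct_card[OF distinct_zipI1[OF xs(2)]] distinct_card[OF xs(2)] distinct_card[OF ys(2)]
      xs(1) ys(1) by simp
  ultimately show ?thesis
  proof (rule that)
    show "b = b'" if "(a, b) \<in> set (zip xs ys)" "(a, b') \<in> set (zip xs ys)" for a b b'
      using that xs(2) ys(2) by (auto simp: set_zip nth_eq_iff_index_eq)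
    show "a = a'" if "(a, b) \<in> set (zip xs ys)" "(a', b) \<in> set (zip xs ys)" for a a' b
      using that xs(2) ys(2) by (auto simp: set_zip nth_eq_iff_index_eq)
  qed
qed

definition cover_labelling :: "'a set \<Rightarrow> 'b set \<Rightarrow> ('a \<times> 'b) set \<Rightarrow> 'a \<times> 'b \<Rightarrow> nat set" where
  "cover_labelling CG CH D p =
     (if p \<in> D then {} else if fst p \<in> CG then {1} else if snd p \<in> CH then {2} else {})"

context
  fixes VG :: "'a set" and EG :: "'a \<Rightarrow> 'a \<Rightarrow> bool"
    and VH :: "'b set" and EH :: "'b \<Rightarrow> 'b \<Rightarrow> bool"
    and CG :: "'a set" and CH :: "'b set" and D :: "('a \<times> 'b) set"
  assumes G: "simple_graph VG EG" and H: "simple_graph VH EH"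
    and no_isolated_G: "no_isolated VG EG" and no_isolated_H: "no_isolated VH EH"
    and cover_G: "vertex_cover VG EG CG" and cover_H: "vertex_cover VH EH CH"
    and outside_neighbour: "\<And>c. c \<in> CG \<Longrightarrow> \<exists>u. EG c u \<and> u \<notin> CG"
    and matching: "D \<subseteq> CG \<times> CH"
      "\<And>a b b'. (a, b) \<in> D \<Longrightarrow> (a, b') \<in> D \<Longrightarrow> b = b'"
      "\<And>a a' b. (a, b) \<in> D \<Longrightarrow> (a', b) \<in> D \<Longrightarrow> a = a'"
begin

private abbreviation "f \<equiv> cover_labelling CG CH D"

private lemma empty_label_cases:
  assumes "f (g, h) = {}"
  shows "(g, h) \<in> D \<or> (g \<notin> CG \<and> h \<notin> CH)"
  using assms unfolding cover_labelling_def by (auto split: if_splits)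

lemma cover_labelling_rainbow:
  assumes "v \<in> VG \<times> VH" "f v = {}"
  shows "(\<Union>u\<in>nbhd (box_edge EG EH) v. f u) = {1, 2}"
proof -
  obtain g h where v: "v = (g, h)"
    by (cases v)
  obtain g' h' where "EG g g'" "EH h h'" "f (g, h') = {1} \<and> f (g', h) = {2}
      \<or> f (g', h) = {1} \<and> f (g, h') = {2}"
  proof (cases "v \<in> D")
    case True
    then have "g \<in> CG" "h \<in> CH"
      using matching(1) v by auto
    obtain g' where g': "EG g g'" "g' \<notin> CG"
      using outside_neighbour[OF \<open>g \<in> CG\<close>] by blast
    obtain h' where h': "EH h h'"
      using no_isolated_H \<open>h \<in> CH\<close> cover_H unfolding no_isolated_def vertex_cover_def by blast
    have "(g, h') \<notin> D"
      using matching(2)[of g h h'] True v h' H unfolding simple_graph_def by blast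
    then have "f (g, h') = {1}" "f (g', h) = {2}"
      using \<open>g \<in> CG\<close> \<open>h \<in> CH\<close> g' matching(1) unfolding cover_labelling_def by auto
    then show ?thesis
      using that g' h' by blast
  next
    case False
    then have "g \<notin> CG" "h \<notin> CH"
      using empty_label_cases assms(2) v by blast+
    obtain g' h' where g'h': "EG g g'" "EH h h'"
      using no_isolated_G no_isolated_H assms(1) v unfolding no_isolated_def by blast
    then have "g' \<in> CG" "h' \<in> CH"
      using cover_G cover_H \<open>g \<notin> CG\<close> \<open>h \<notin> CH\<close> unfolding vertex_cover_def by blast+
    then have "f (g', h) = {1}" "f (g, h') = {2}"
      using \<open>g \<notin> CG\<close> \<open>h \<notin> CH\<close> matching(1) unfolding cover_labelling_def by auto
    then show ?thesis
      using that g'h' by blast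
  qed
  moreover have "(g, h') \<in> nbhd (box_edge EG EH) v" "(g', h) \<in> nbhd (box_edge EG EH) v"
    using calculation v by (auto simp: nbhd_def box_edge_def)
  moreover have "f u \<subseteq> {1, 2}" for u
    unfolding cover_labelling_def by auto
  ultimately show ?thesis
    by blast
qed

lemma cover_labelling_empty_indep:
  "indep_set (VG \<times> VH) (box_edge EG EH) {v \<in> VG \<times> VH. f v = {}}"
  unfolding indep_set_def
proof (intro conjI ballI)
  fix p q
  assume "p \<in> {v \<in> VG \<times> VH. f v = {}}" "q \<in> {v \<in> VG \<times> VH. f v = {}}"
  moreover obtain g h g' h' where pq: "p = (g, h)" "q = (g', h')"
    by (cases p, cases q)
  ultimately have p: "(g, h) \<in> D \<or> (g \<notin> CG \<and> h \<notin> CH)" and q: "(g', h') \<in> D \<or> (g' \<notin> CG \<and> h' \<notin> CH)"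
    using empty_label_cases by auto
  show "\<not> box_edge EG EH p q"
  proof
    assume "box_edge EG EH p q"
    then consider "g = g'" "EH h h'" | "h = h'" "EG g g'"
      using pq by (auto simp: box_edge_def)
    then show False
    proof cases
      case 1
      then have "h \<noteq> h'"
        using H unfolding simple_graph_def by auto
      then show False
        using p q 1 matching(1,2) cover_H unfolding vertex_cover_def by blast
    next
      case 2
      then have "g \<noteq> g'"
        using G unfolding simple_graph_def by auto
      then show False
        using p q 2 matching(1,3) cover_G unfolding vertex_cover_def by blast
    qed
  qed
qed simp

lemma cover_labelling_oi2rd: "oi2rd (VG \<times> VH) (box_edge EG EH) f"
  unfolding oi2rd_def using cover_labelling_rainbow cover_labelling_empty_indep
  by (auto simp: cover_labelling_def)

lemma cover_labelling_weight:
  "weight (VG \<times> VH) f + card D = card CG * card VH + card (VG - CG) * card CH"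
proof -
  have sub: "CG \<subseteq> VG" "CH \<subseteq> VH"
    using cover_G cover_H by (auto simp: vertex_cover_def)
  have "finite VG" "finite VH"
    using G H by (simp_all add: simple_graph_finite)
  then have fin: "finite VG" "finite VH" "finite CG" "finite CH" "finite D"
    using sub finite_subset[OF matching(1)] by (auto intro: finite_subset)
  let ?P = "(CG \<times> VH - D) \<union> ((VG - CG) \<times> CH)"
  have "?P \<subseteq> VG \<times> VH"
    using sub by blast
  have "weight (VG \<times> VH) f = (\<Sum>p\<in>VG \<times> VH. if p \<in> ?P then 1 else 0)"
    unfolding weight_def using matching(1) by (intro sum.cong) (auto simp: cover_labelling_def)
  also have "\<dots> = (\<Sum>p\<in>VG \<times> VH \<inter> ?P. 1)"
    by (rule sum.inter_restrict[symmetric]) (simp add: fin)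
  also have "\<dots> = card ?P"
    using Int_absorb1[OF \<open>?P \<subseteq> VG \<times> VH\<close>] by simp
  also have "\<dots> = card (CG \<times> VH - D) + card ((VG - CG) \<times> CH)"
    by (rule card_Un_disjoint) (use fin in auto)
  also have "card (CG \<times> VH - D) = card CG * card VH - card D"
    using matching(1) sub fin by (simp add: card_Diff_subset card_cartesian_product subset_iff)
  finally have "weight (VG \<times> VH) f = card CG * card VH - card D + card (VG - CG) * card CH"
    by (simp add: card_cartesian_product)
  moreover have "card D \<le> card CG * card VH"
    using card_mono[of "CG \<times> VH" D] matching(1) sub fin by (auto simp: card_cartesian_product)
  ultimately show ?thesis
    by simp
qed

end

theorem theorem3:
  fixes VG :: "'a set" and EG :: "'a \<Rightarrow> 'a \<Rightarrow> bool"
    and VH :: "'b set" and EH :: "'b \<Rightarrow> 'b \<Rightarrow> bool"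
  assumes "simple_graph VG EG" and "simple_graph VH EH"
    and "no_isolated VG EG" and "no_isolated VH EH"
  shows "int (gamma_oir2 (VG \<times> VH) (box_edge EG EH))
    \<le> int (indep_num VG EG) * int (vc_num VH EH) + int (vc_num VG EG) * int (card VH)
       - int (min (vc_num VG EG) (vc_num VH EH))"
proof -
  obtain CG where CG: "vertex_cover VG EG CG" "card CG = vc_num VG EG"
    using obtain_minimum_vertex_cover[OF assms(1)] .
  obtain CH where CH: "vertex_cover VH EH CH" "card CH = vc_num VH EH"
    using obtain_minimum_vertex_cover[OF assms(2)] .
  have "finite CG" "finite CH"
    using finite_vertex_cover[OF assms(1) CG(1)] finite_vertex_cover[OF assms(2) CH(1)] .
  obtain D where D: "D \<subseteq> CG \<times> CH" "card D = min (card CG) (card CH)"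
    "\<And>a b b'. (a, b) \<in> D \<Longrightarrow> (a, b') \<in> D \<Longrightarrow> b = b'"
    "\<And>a a' b. (a, b) \<in> D \<Longrightarrow> (a', b) \<in> D \<Longrightarrow> a = a'"
    using obtain_matching[OF \<open>finite CG\<close> \<open>finite CH\<close>] by blast
  note labelling = assms CG(1) CH(1)
    minimum_vertex_cover_has_outside_neighbour[OF assms(1) CG] D(1,3,4)
  have "finite (VG \<times> VH)"
    using assms(1,2) by (simp add: simple_graph_finite)
  have "gamma_oir2 (VG \<times> VH) (box_edge EG EH) + card D
      \<le> weight (VG \<times> VH) (cover_labelling CG CH D) + card D"
    using gamma_oir2_le[OF \<open>finite (VG \<times> VH)\<close> cover_labelling_oi2rd[OF labelling]] by simp
  also have "\<dots> = card CG * card VH + card (VG - CG) * card CH"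
    by (rule cover_labelling_weight[OF labelling])
  also have "\<dots> \<le> card CG * card VH + indep_num VG EG * card CH"
    using card_le_indep_num[OF assms(1) vertex_cover_complement_indep[OF CG(1)]] by simp
  finally have "int (gamma_oir2 (VG \<times> VH) (box_edge EG EH)) + int (card D)
      \<le> int (card CG) * int (card VH) + int (indep_num VG EG) * int (card CH)"
    by (simp only: of_nat_add[symmetric] of_nat_mult[symmetric] of_nat_le_iff)
  then show ?thesis
    using CG(2) CH(2) D(2) by simp
qed

end
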